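(* Fix $h$ in the interior of $\mathcal H$. Let $\eta$ be a Borel probability measure on $\mathcal Y_h$ with finite first moment and $\int y\,\eta(dy)=0$. Define the measure $\rho:=(S_h)_\#\bigl((1-h^\top y)\,\eta(dy)\bigr)$ on $\mathcal X_d$. Then $\rho\in\mathfrak M_d$, the measure $q_h(dx):=(1+h^\top x)\rho(dx)$ satisfies $(T_h)_\#q_h=\eta$, and $\rho$ is the unique element $\rho'\in\mathfrak M_d$ whose fiber $(T_h)_\#\bigl((1+h^\top x)\rho'(dx)\bigr)$ equals $\eta$.
   Context: Fix an integer $d\ge 2$. Let $H\in\mathbb R^{d\times(d-1)}$ have orthonormal columns spanning $T_d:=\{u\in\mathbb R^d:\mathbf 1^\top u=0\}$, and set $\gamma_i:=H^\top e_i\in\mathbb R^{d-1}$ ($i=1,\dots,d$). Let $\mathcal X_d:=\{x\in\mathbb R^{d-1}:1+\gamma_i^\top x\ge0\ \forall i\}$ and $\mathcal H:=\mathrm{conv}\{\gamma_1,\dots,\gamma_d\}$. An anchored law is a Borel probability measure $\rho$ on $\mathcal X_d$ with $\int x\,\rho(dx)=0$; $\mathfrak M_d$ is the set of anchored laws. For $h\in\mathcal H$ define $\mathcal Y_h:=\{y\in\mathbb R^{d-1}:1+(\gamma_i-h)^\top y\ge 0\ \forall i\}$, $T_h(x):=x/(1+h^\top x)$ for $x\in\mathcal X_d$ with $1+h^\top x>0$, and $S_h(y):=y/(1-h^\top y)$ for $y\in\mathcal Y_h$ (one has $1-h^\top y>0$ on $\mathcal Y_h$). *)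

theory Defs
  imports "HOL-Probability.Probability"
begin

text \<open>Setting. The index type 'm has d = CARD('m) elements (coordinates of R^d);
  the type 'n has d-1 elements. H :: real^'n^'m is a d x (d-1) matrix
  (H $ i $ j); gamma_i = H^T e_i is the i-th row of H.\<close>

definition gam :: "real^'n^'m \<Rightarrow> 'm \<Rightarrow> real^'n" where
  "gam H i = row i H"

definition admissible_H :: "real^'n^'m \<Rightarrow> bool" where
  "admissible_H H \<longleftrightarrow> transpose H ** H = mat 1
     \<and> range (\<lambda>v. H *v v) = {u :: real^'m. (\<Sum>i\<in>UNIV. u $ i) = 0}"

definition X_set :: "real^'n^'m \<Rightarrow> (real^'n) set" where
  "X_set H = {x. \<forall>i. 0 \<le> 1 + gam H i \<bullet> x}"

definition Hull_set :: "real^'n^'m \<Rightarrow> (real^'n) set" where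
  "Hull_set H = convex hull (range (gam H))"

definition Y_set :: "real^'n^'m \<Rightarrow> real^'n \<Rightarrow> (real^'n) set" where
  "Y_set H h = {y. \<forall>i. 0 \<le> 1 + (gam H i - h) \<bullet> y}"

definition T_map :: "real^'n \<Rightarrow> real^'n \<Rightarrow> real^'n" where
  "T_map h x = (1 / (1 + h \<bullet> x)) *\<^sub>R x"

definition S_map :: "real^'n \<Rightarrow> real^'n \<Rightarrow> real^'n" where
  "S_map h y = (1 / (1 - h \<bullet> y)) *\<^sub>R y"

definition anchored :: "real^'n^'m \<Rightarrow> (real^'n) measure \<Rightarrow> bool" where
  "anchored H \<rho> \<longleftrightarrow> prob_space \<rho> \<and> sets \<rho> = sets borel
     \<and> emeasure \<rho> (X_set H) = 1
     \<and> integrable \<rho> (\<lambda>x. x) \<and> (\<integral>x. x \<partial>\<rho>) = 0"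

definition fiber :: "real^'n \<Rightarrow> (real^'n) measure \<Rightarrow> (real^'n) measure" where
  "fiber h \<rho> = distr (density \<rho> (\<lambda>x. ennreal (1 + h \<bullet> x))) borel (T_map h)"

end

theory Submission imports Defs begin

text \<open>Since the rows \<open>\<gamma>\<^sub>i\<close> of \<open>H\<close> sum to zero, \<open>1 - h\<^sup>T y\<close> is the average of the
  nonnegative numbers \<open>1 + (\<gamma>\<^sub>i - h)\<^sup>T y\<close>, and it vanishes only if the whole hull lies in one
  hyperplane avoiding \<open>h\<close>; so it is positive on \<open>\<Y>\<^sub>h\<close>. Hence \<open>(1 - h\<^sup>T y) \<eta>(dy)\<close> is a
  probability measure whose push-forward under \<open>S\<^sub>h\<close> lives on \<open>\<X>\<^sub>d\<close> and has the same first
  moment as \<open>\<eta>\<close>, because \<open>(1 - h\<^sup>T y) S\<^sub>h y = y\<close>. The maps \<open>S\<^sub>h\<close> and \<open>T\<^sub>h\<close> are mutually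
  inverse and the weights \<open>1 - h\<^sup>T y\<close> and \<open>1 + h\<^sup>T x\<close> are reciprocal along them, so
  reweighting-and-pushing forward by \<open>S\<^sub>h\<close> inverts the fiber map on all anchored laws
  (on which \<open>1 + h\<^sup>T x > 0\<close> since \<open>h\<close> is interior).\<close>

lemma distr_density_distr_density_inverse:
  fixes M :: "'a::topological_space measure"
  assumes sets_M: "sets M = sets borel"
    and [measurable]: "a \<in> borel_measurable borel" "b \<in> borel_measurable borel"
      "f \<in> borel_measurable borel" "g \<in> borel_measurable borel"
    and inverse: "AE x in M. 0 \<le> a x \<and> 0 \<le> b (f x) \<and> a x * b (f x) = 1 \<and> g (f x) = x"
  shows "distr (density (distr (density M (\<lambda>x. ennreal (a x))) borel f)
      (\<lambda>y. ennreal (b y))) borel g = M"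
proof -
  have meas_M: "measurable M borel = measurable borel borel"
    by (rule measurable_cong_sets[OF sets_M refl])
  have [measurable]: "a \<in> borel_measurable M" "f \<in> borel_measurable M"
    by (simp_all add: meas_M)
  have "density (distr (density M (\<lambda>x. ennreal (a x))) borel f) (\<lambda>y. ennreal (b y))
      = distr (density (density M (\<lambda>x. ennreal (a x))) (\<lambda>x. ennreal (b (f x)))) borel f"
    by (rule density_distr) auto
  also have "density (density M (\<lambda>x. ennreal (a x))) (\<lambda>x. ennreal (b (f x)))
      = density M (\<lambda>x. ennreal (a x) * ennreal (b (f x)))"
    by (rule density_density_eq) auto
  also have "\<dots> = density M (\<lambda>_. 1)"
  proof (rule density_cong)
    show "AE x in M. ennreal (a x) * ennreal (b (f x)) = 1"
      using inverse by eventually_elim (auto simp: ennreal_mult'[symmetric])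
  qed auto
  finally have "distr (density (distr (density M (\<lambda>x. ennreal (a x))) borel f)
      (\<lambda>y. ennreal (b y))) borel g = distr (distr M borel f) borel g"
    by (simp add: density_1)
  also have "\<dots> = distr M borel (\<lambda>x. g (f x))"
    by (simp add: distr_distr comp_def)
  also have "\<dots> = distr M borel (\<lambda>x. x)"
  proof (rule distr_cong_AE)
    show "AE x in M. g (f x) = x"
      using inverse by eventually_elim auto
  qed (auto simp: meas_M)
  also have "\<dots> = M"
    by (rule distr_id2) (simp add: sets_M)
  finally show ?thesis .
qed

lemma prob_space_distr_density:
  assumes "integrable M w" "AE x in M. 0 \<le> w x" "(\<integral>x. w x \<partial>M) = 1"
    and "f \<in> measurable M N"
  shows "prob_space (distr (density M (\<lambda>x. ennreal (w x))) N f)"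
proof -
  have [measurable]: "w \<in> borel_measurable M"
    using assms(1) by auto
  have "emeasure (density M (\<lambda>x. ennreal (w x))) (space M) = (\<integral>\<^sup>+x. ennreal (w x) \<partial>M)"
    by (subst emeasure_density) (auto intro!: nn_integral_cong)
  also have "\<dots> = 1"
    using assms(1-3) by (simp add: nn_integral_eq_integral)
  finally have "prob_space (density M (\<lambda>x. ennreal (w x)))"
    by (intro prob_spaceI) simp
  then show ?thesis
    by (rule prob_space.prob_space_distr) (simp add: assms(4))
qed

lemma
  fixes g f :: "'a \<Rightarrow> 'b::{banach, second_countable_topology}"
  assumes "integrable M g"
    and [measurable]: "w \<in> borel_measurable M" "f \<in> borel_measurable M"
    and "AE x in M. 0 \<le> w x" "AE x in M. w x *\<^sub>R f x = g x"
  shows integrable_distr_density_rescaled: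
      "integrable (distr (density M (\<lambda>x. ennreal (w x))) borel f) (\<lambda>x. x)"
    and integral_distr_density_rescaled:
      "(\<integral>x. x \<partial>distr (density M (\<lambda>x. ennreal (w x))) borel f) = (\<integral>x. g x \<partial>M)"
proof -
  have [measurable]: "g \<in> borel_measurable M"
    using assms(1) by auto
  have "integrable M (\<lambda>x. w x *\<^sub>R f x)"
  proof (rule integrable_cong_AE_imp[OF assms(1)])
    show "AE x in M. g x = w x *\<^sub>R f x"
      using assms(5) by (auto elim: eventually_mono)
  qed measurable
  then have "integrable (density M (\<lambda>x. ennreal (w x))) f"
    using assms(4) by (simp add: integrable_density)
  then show "integrable (distr (density M (\<lambda>x. ennreal (w x))) borel f) (\<lambda>x. x)"
    by (simp add: integrable_distr_eq)
  have "(\<integral>x. x \<partial>distr (density M (\<lambda>x. ennreal (w x))) borel f)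
      = (\<integral>x. f x \<partial>density M (\<lambda>x. ennreal (w x)))"
    by (simp add: integral_distr)
  also have "\<dots> = (\<integral>x. w x *\<^sub>R f x \<partial>M)"
    using assms(4) by (simp add: integral_density)
  also have "\<dots> = (\<integral>x. g x \<partial>M)"
    using assms(5) by (rule integral_cong_AE[rotated 2]) auto
  finally show "(\<integral>x. x \<partial>distr (density M (\<lambda>x. ennreal (w x))) borel f) = (\<integral>x. g x \<partial>M)" .
qed

lemma sum_gam_eq_0:
  fixes H :: "real^'n^'m"
  assumes "admissible_H H"
  shows "(\<Sum>i\<in>UNIV. gam H i) = 0"
proof -
  have "(\<Sum>i\<in>UNIV. gam H i) \<bullet> v = 0" for v
  proof -
    have "(\<Sum>i\<in>UNIV. (H *v v) $ i) = 0"
      using assms unfolding admissible_H_def by auto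
    moreover have "(H *v v) $ i = gam H i \<bullet> v" for i
      by (simp add: gam_def matrix_mult_dot row_def)
    ultimately show ?thesis
      by (simp add: inner_sum_left)
  qed
  then show ?thesis
    by (metis inner_eq_zero_iff)
qed

lemma Hull_set_X_set_nonneg:
  fixes H :: "real^'n^'m"
  assumes "g \<in> Hull_set H" "x \<in> X_set H"
  shows "0 \<le> 1 + g \<bullet> x"
proof -
  have "-1 \<le> x \<bullet> gam H i" for i
    using assms(2) unfolding X_set_def by (auto simp: inner_commute dest: spec[of _ i])
  then have "range (gam H) \<subseteq> {g. -1 \<le> x \<bullet> g}"
    by auto
  then have "convex hull (range (gam H)) \<subseteq> {g. -1 \<le> x \<bullet> g}"
    by (rule hull_minimal) (rule convex_halfspace_ge)
  then show ?thesis
    using assms(1) by (auto simp: Hull_set_def inner_commute)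
qed

lemma interior_Hull_set_X_set_pos:
  fixes H :: "real^'n^'m"
  assumes "h \<in> interior (Hull_set H)" "x \<in> X_set H"
  shows "0 < 1 + h \<bullet> x"
proof (cases "x = 0")
  case True
  then show ?thesis by simp
next
  case False
  obtain e where e: "e > 0" "ball h e \<subseteq> Hull_set H"
    using assms(1) mem_interior by blast
  define g where "g = h - (e / 2 / norm x) *\<^sub>R x"
  have "dist h g < e"
    using e False by (simp add: g_def dist_norm)
  then have "g \<in> Hull_set H"
    using e by auto
  then have "0 \<le> 1 + g \<bullet> x"
    using assms(2) by (rule Hull_set_X_set_nonneg)
  moreover have "g \<bullet> x = h \<bullet> x - e / 2 * norm x"
    using False by (simp add: g_def inner_diff_left power2_norm_eq_inner[symmetric] power2_eq_square)
  moreover have "0 < e / 2 * norm x"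
    using e False by simp
  ultimately show ?thesis
    by linarith
qed

lemma Y_set_pos:
  fixes H :: "real^'n^'m"
  assumes sum_gam: "(\<Sum>i\<in>UNIV. gam H i) = 0" and h: "h \<in> Hull_set H" and y: "y \<in> Y_set H h"
  shows "0 < 1 - h \<bullet> y"
proof -
  define c where "c i = 1 + (gam H i - h) \<bullet> y" for i
  have c_nonneg: "0 \<le> c i" for i
    using y by (simp add: c_def Y_set_def)
  have "(\<Sum>i\<in>UNIV. c i) = real CARD('m) * (1 - h \<bullet> y)"
    using sum_gam
    by (simp add: c_def sum.distrib inner_diff_left sum_subtractf inner_sum_left[symmetric]
        algebra_simps)
  moreover have "(\<Sum>i\<in>UNIV. c i) \<noteq> 0"
  proof
    assume "(\<Sum>i\<in>UNIV. c i) = 0"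
    then have "c i = 0" for i
      using c_nonneg sum_nonneg_eq_0_iff[of UNIV c] by simp
    then have "range (gam H) \<subseteq> {g. y \<bullet> g = h \<bullet> y - 1}"
      by (auto simp: c_def inner_diff_left inner_commute algebra_simps)
    then have "convex hull (range (gam H)) \<subseteq> {g. y \<bullet> g = h \<bullet> y - 1}"
      by (rule hull_minimal) (rule convex_hyperplane)
    then show False
      using h by (auto simp: Hull_set_def inner_commute)
  qed
  moreover have "0 \<le> (\<Sum>i\<in>UNIV. c i)"
    using c_nonneg by (simp add: sum_nonneg)
  ultimately have "0 < real CARD('m) * (1 - h \<bullet> y)"
    by linarith
  then show ?thesis
    by (simp add: zero_less_mult_iff)
qed

lemma borel_measurable_S_map [measurable]: "S_map h \<in> borel_measurable borel"
  unfolding S_map_def by measurable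

lemma borel_measurable_T_map [measurable]: "T_map h \<in> borel_measurable borel"
  unfolding T_map_def by measurable

lemma X_set_in_borel [measurable]: "X_set H \<in> sets borel"
  unfolding X_set_def by measurable

lemma
  assumes "0 < 1 - h \<bullet> y"
  shows one_plus_inner_S_map: "1 + h \<bullet> S_map h y = 1 / (1 - h \<bullet> y)"
    and T_map_S_map: "T_map h (S_map h y) = y"
proof -
  show *: "1 + h \<bullet> S_map h y = 1 / (1 - h \<bullet> y)"
    using assms by (simp add: S_map_def field_simps)
  show "T_map h (S_map h y) = y"
    using assms unfolding T_map_def * by (simp add: S_map_def)
qed

lemma
  assumes "0 < 1 + h \<bullet> x"
  shows one_minus_inner_T_map: "1 - h \<bullet> T_map h x = 1 / (1 + h \<bullet> x)"
    and S_map_T_map: "S_map h (T_map h x) = x"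
proof -
  show *: "1 - h \<bullet> T_map h x = 1 / (1 + h \<bullet> x)"
    using assms by (simp add: T_map_def field_simps)
  show "S_map h (T_map h x) = x"
    using assms unfolding S_map_def * by (simp add: T_map_def)
qed

lemma S_map_in_X_set:
  assumes "y \<in> Y_set H h" "0 < 1 - h \<bullet> y"
  shows "S_map h y \<in> X_set H"
proof -
  have "1 + gam H i \<bullet> S_map h y = (1 + (gam H i - h) \<bullet> y) / (1 - h \<bullet> y)" for i
    using assms(2) by (simp add: S_map_def field_simps inner_diff_left)
  then show ?thesis
    using assms by (simp add: X_set_def Y_set_def)
qed

lemma AE_Y_set_pos:
  fixes H :: "real^'n^'m"
  assumes "admissible_H H" "h \<in> Hull_set H" "prob_space \<eta>" "emeasure \<eta> (Y_set H h) = 1"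
  shows "AE y in \<eta>. y \<in> Y_set H h \<and> 0 < 1 - h \<bullet> y"
proof -
  have "AE y in \<eta>. y \<in> Y_set H h"
    using assms(3,4) by (simp add: prob_space.AE_prob_1 measure_def)
  then show ?thesis
    by eventually_elim (auto dest: Y_set_pos[OF sum_gam_eq_0[OF assms(1)] assms(2)])
qed

lemma anchored_distr_S_map:
  fixes H :: "real^'n^'m"
  assumes "prob_space \<eta>" and sets_\<eta>: "sets \<eta> = sets borel"
    and pos: "AE y in \<eta>. y \<in> Y_set H h \<and> 0 < 1 - h \<bullet> y"
    and "integrable \<eta> (\<lambda>y. y)" "(\<integral>y. y \<partial>\<eta>) = 0"
  shows "anchored H (distr (density \<eta> (\<lambda>y. ennreal (1 - h \<bullet> y))) borel (S_map h))"
    (is "anchored H ?\<rho>")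
proof -
  have meas_\<eta>: "measurable \<eta> borel = measurable borel borel"
    by (rule measurable_cong_sets[OF sets_\<eta> refl])
  have [measurable]: "S_map h \<in> borel_measurable \<eta>" "(\<lambda>y. 1 - h \<bullet> y) \<in> borel_measurable \<eta>"
    by (simp_all add: meas_\<eta>)
  have nonneg: "AE y in \<eta>. 0 \<le> 1 - h \<bullet> y"
    using pos by eventually_elim simp
  interpret \<eta>: prob_space \<eta>
    by fact
  have weight_integrable: "integrable \<eta> (\<lambda>y. 1 - h \<bullet> y)"
    using assms(4) by simp
  have weight_integral: "(\<integral>y. 1 - h \<bullet> y \<partial>\<eta>) = 1"
    using assms(4,5) by (simp add: \<eta>.prob_space)
  interpret \<rho>: prob_space ?\<rho>
    by (rule prob_space_distr_density[OF weight_integrable nonneg weight_integral]) simp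
  have "AE y in \<eta>. 0 < ennreal (1 - h \<bullet> y) \<longrightarrow> S_map h y \<in> X_set H"
    using pos by eventually_elim (simp add: S_map_in_X_set)
  then have "AE y in density \<eta> (\<lambda>y. ennreal (1 - h \<bullet> y)). S_map h y \<in> X_set H"
    by (simp add: AE_density)
  then have "AE x in ?\<rho>. x \<in> X_set H"
    by (subst AE_distr_iff) simp_all
  then have "emeasure ?\<rho> (X_set H) = 1"
    using \<rho>.AE_in_set_eq_1[of "X_set H"] by (simp add: \<rho>.emeasure_eq_measure)
  moreover have rescaled: "AE y in \<eta>. (1 - h \<bullet> y) *\<^sub>R S_map h y = y"
    using pos by eventually_elim (simp add: S_map_def)
  moreover have "integrable ?\<rho> (\<lambda>x. x)"
    by (rule integrable_distr_density_rescaled[OF assms(4) _ _ nonneg rescaled]; measurable)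
  moreover have "(\<integral>x. x \<partial>?\<rho>) = 0"
    using integral_distr_density_rescaled[OF assms(4) _ _ nonneg rescaled] assms(5) by simp
  ultimately show ?thesis
    using \<rho>.prob_space_axioms sets_\<eta> by (simp add: anchored_def)
qed

lemma fiber_distr_S_map:
  assumes "sets \<eta> = sets borel" "AE y in \<eta>. 0 < 1 - h \<bullet> y"
  shows "fiber h (distr (density \<eta> (\<lambda>y. ennreal (1 - h \<bullet> y))) borel (S_map h)) = \<eta>"
proof -
  have inverse: "AE y in \<eta>. 0 \<le> 1 - h \<bullet> y \<and> 0 \<le> 1 + h \<bullet> S_map h y
      \<and> (1 - h \<bullet> y) * (1 + h \<bullet> S_map h y) = 1 \<and> T_map h (S_map h y) = y"
    using assms(2) by eventually_elim (simp add: one_plus_inner_S_map T_map_S_map)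
  show ?thesis
    unfolding fiber_def using assms(1)
    by (rule distr_density_distr_density_inverse) (measurable, rule inverse)
qed

lemma distr_S_map_fiber:
  fixes H :: "real^'n^'m"
  assumes "h \<in> interior (Hull_set H)" "anchored H \<rho>"
  shows "distr (density (fiber h \<rho>) (\<lambda>y. ennreal (1 - h \<bullet> y))) borel (S_map h) = \<rho>"
proof -
  have "AE x in \<rho>. x \<in> X_set H"
    using assms(2) by (simp add: anchored_def prob_space.AE_prob_1 measure_def)
  then have "AE x in \<rho>. 0 < 1 + h \<bullet> x"
    using interior_Hull_set_X_set_pos[OF assms(1)] by (auto elim: eventually_mono)
  then have inverse: "AE x in \<rho>. 0 \<le> 1 + h \<bullet> x \<and> 0 \<le> 1 - h \<bullet> T_map h x
      \<and> (1 + h \<bullet> x) * (1 - h \<bullet> T_map h x) = 1 \<and> S_map h (T_map h x) = x"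
    by eventually_elim (simp add: one_minus_inner_T_map S_map_T_map)
  have "sets \<rho> = sets borel"
    using assms(2) by (simp add: anchored_def)
  then show ?thesis
    unfolding fiber_def
    by (rule distr_density_distr_density_inverse) (measurable, rule inverse)
qed

theorem theorem3p6:
  fixes H :: "real^'n^'m" and h :: "real^'n"
    and \<eta> \<rho> :: "(real^'n) measure"
  assumes "CARD('m) = CARD('n) + 1"
    and "admissible_H H"
    and "h \<in> interior (Hull_set H)"
    and "prob_space \<eta>" and "sets \<eta> = sets borel"
    and "emeasure \<eta> (Y_set H h) = 1"
    and "integrable \<eta> (\<lambda>y. y)"
    and "(\<integral>y. y \<partial>\<eta>) = 0"
    and "\<rho> = distr (density \<eta> (\<lambda>y. ennreal (1 - h \<bullet> y))) borel (S_map h)"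
  shows "anchored H \<rho>
    \<and> fiber h \<rho> = \<eta>
    \<and> (\<forall>\<rho>'. anchored H \<rho>' \<and> fiber h \<rho>' = \<eta> \<longrightarrow> \<rho>' = \<rho>)"
proof -
  have pos: "AE y in \<eta>. y \<in> Y_set H h \<and> 0 < 1 - h \<bullet> y"
    using AE_Y_set_pos[OF assms(2) _ assms(4,6)] assms(3) interior_subset by blast
  have "anchored H \<rho>"
    using anchored_distr_S_map[OF assms(4,5) pos assms(7,8)] assms(9) by simp
  moreover have "fiber h \<rho> = \<eta>"
    using fiber_distr_S_map[OF assms(5)] pos assms(9) by (auto elim: eventually_mono)
  moreover have "\<rho>' = \<rho>" if "anchored H \<rho>'" "fiber h \<rho>' = \<eta>" for \<rho>'
    using distr_S_map_fiber[OF assms(3) that(1)] that(2) assms(9) by simp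
  ultimately show ?thesis
    by blast
qed

end
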